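(* Let $Q$ be a Moufang loop with trivial nucleus. Then the assignment $\sigma(L_x)=R_x$, $\sigma(L_x^{-1})=R_x^{-1}$, $\sigma(R_x)=M_x^{-1}$, $\sigma(R_x^{-1})=M_x$ (for $x\in Q$, where $M_x=R_xL_x$) defines a well-defined mapping $\sigma:\{L_x,R_x,L_x^{-1},R_x^{-1}:x\in Q\}\to\mathrm{Mlt}(Q)$.
   Context: A loop is a magma with identity $1$ in which the left translations $L_x(y)=xy$ and right translations $R_x(y)=yx$ are bijections; it is Moufang if it satisfies $xy\cdot zx=(x\cdot yz)x$. $\mathrm{Mlt}(Q)$ is the permutation group generated by all $L_x,R_x$. The nucleus is the set of $x$ with $x(yz)=(xy)z$, $y(xz)=(yx)z$, $y(zx)=(yz)x$ for all $y,z$. Well-definedness means that whenever two of the listed permutations coincide, their prescribed images coincide. *)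

theory Defs
  imports Main
begin

definition is_loop :: "('a \<Rightarrow> 'a \<Rightarrow> 'a) \<Rightarrow> 'a \<Rightarrow> bool" where
  "is_loop mult e \<longleftrightarrow>
     (\<forall>x. mult e x = x \<and> mult x e = x) \<and>
     (\<forall>x. bij (mult x)) \<and> (\<forall>x. bij (\<lambda>y. mult y x))"

definition is_moufang :: "('a \<Rightarrow> 'a \<Rightarrow> 'a) \<Rightarrow> bool" where
  "is_moufang mult \<longleftrightarrow>
     (\<forall>x y z. mult (mult x y) (mult z x) = mult (mult x (mult y z)) x)"

definition nucleus :: "('a \<Rightarrow> 'a \<Rightarrow> 'a) \<Rightarrow> 'a set" where
  "nucleus mult = {x. \<forall>y z.
      mult x (mult y z) = mult (mult x y) z \<and>
      mult y (mult x z) = mult (mult y x) z \<and>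
      mult y (mult z x) = mult (mult y z) x}"

definition Lt :: "('a \<Rightarrow> 'a \<Rightarrow> 'a) \<Rightarrow> 'a \<Rightarrow> 'a \<Rightarrow> 'a" where
  "Lt mult x = (\<lambda>y. mult x y)"

definition Rt :: "('a \<Rightarrow> 'a \<Rightarrow> 'a) \<Rightarrow> 'a \<Rightarrow> 'a \<Rightarrow> 'a" where
  "Rt mult x = (\<lambda>y. mult y x)"

text \<open>M_x = R_x L_x (composition; in a Moufang loop L_x and R_x commute).\<close>
definition Mt :: "('a \<Rightarrow> 'a \<Rightarrow> 'a) \<Rightarrow> 'a \<Rightarrow> 'a \<Rightarrow> 'a" where
  "Mt mult x = Rt mult x \<circ> Lt mult x"

inductive_set Mlt :: "('a \<Rightarrow> 'a \<Rightarrow> 'a) \<Rightarrow> ('a \<Rightarrow> 'a) set" for mult where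
  Mlt_L: "Lt mult x \<in> Mlt mult"
| Mlt_R: "Rt mult x \<in> Mlt mult"
| Mlt_id: "id \<in> Mlt mult"
| Mlt_comp: "f \<in> Mlt mult \<Longrightarrow> g \<in> Mlt mult \<Longrightarrow> f \<circ> g \<in> Mlt mult"
| Mlt_inv: "f \<in> Mlt mult \<Longrightarrow> inv f \<in> Mlt mult"

text \<open>The graph of the assignment sigma, as a set of (argument, prescribed image) pairs.\<close>
definition sigma_graph :: "('a \<Rightarrow> 'a \<Rightarrow> 'a) \<Rightarrow> (('a \<Rightarrow> 'a) \<times> ('a \<Rightarrow> 'a)) set" where
  "sigma_graph mult =
     (\<Union>x. {(Lt mult x, Rt mult x),
           (inv (Lt mult x), inv (Rt mult x)),
           (Rt mult x, inv (Mt mult x)),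
           (inv (Rt mult x), Mt mult x)})"

end

theory Submission
  imports Defs
begin

text \<open>By the inverse property of Moufang loops, \<open>L\<^sub>x\<inverse> = L\<^bsub>x\<inverse>\<^esub>\<close>, \<open>R\<^sub>x\<inverse> = R\<^bsub>x\<inverse>\<^esub>\<close> and
  \<open>M\<^sub>x\<inverse> = M\<^bsub>x\<inverse>\<^esub>\<close>, so \<open>\<sigma>\<close> is just the assignment \<open>L\<^sub>x \<mapsto> R\<^sub>x\<close>, \<open>R\<^sub>x \<mapsto> M\<^bsub>x\<inverse>\<^esub>\<close> on
  translations. Translations of the same kind determine \<open>x\<close>, so the only critical coincidence
  is \<open>L\<^sub>x = R\<^sub>y\<close>, which forces \<open>y = x\<close> with \<open>x\<close> commuting with every element. For such \<open>x\<close>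
  the Moufang identity becomes \<open>xa \<cdot> xb = x(x(ab))\<close>, which shows that \<open>x\<^sup>3\<close> lies in the nucleus; hence \<open>x\<^sup>3 = 1\<close>, so \<open>R\<^sub>x M\<^sub>x = L\<^sub>x\<^sup>3 = id\<close> and
  \<open>R\<^sub>x = M\<^sub>x\<inverse> = M\<^bsub>x\<inverse>\<^esub>\<close>.\<close>

lemma Range_sigma_graph_subset_Mlt: "Range (sigma_graph mult) \<subseteq> Mlt mult"
  unfolding sigma_graph_def Mt_def by (auto intro: Mlt.intros)

locale moufang_loop =
  fixes mult :: "'a \<Rightarrow> 'a \<Rightarrow> 'a" (infixl "\<cdot>" 70) and e :: 'a
  assumes loop: "is_loop mult e" and moufang_law: "is_moufang mult"
begin

abbreviation "L \<equiv> Lt mult"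
abbreviation "R \<equiv> Rt mult"
abbreviation "M \<equiv> Mt mult"

lemma left_id [simp]: "e \<cdot> x = x"
  using loop unfolding is_loop_def by blast

lemma right_id [simp]: "x \<cdot> e = x"
  using loop unfolding is_loop_def by blast

lemma moufang: "(x \<cdot> y) \<cdot> (z \<cdot> x) = (x \<cdot> (y \<cdot> z)) \<cdot> x"
  using moufang_law unfolding is_moufang_def by blast

lemma bij_Lt: "bij (L x)"
  using loop unfolding is_loop_def Lt_def by blast

lemma bij_Rt: "bij (R x)"
  using loop unfolding is_loop_def Rt_def by blast

lemma left_cancel: "x \<cdot> y = x \<cdot> z \<Longrightarrow> y = z"
  using bij_Lt[of x] by (auto simp: Lt_def dest: bij_is_inj injD)

lemma right_cancel: "y \<cdot> x = z \<cdot> x \<Longrightarrow> y = z"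
  using bij_Rt[of x] by (auto simp: Rt_def dest: bij_is_inj injD)

lemma flexible: "(x \<cdot> z) \<cdot> x = x \<cdot> (z \<cdot> x)"
  using moufang[of x e z] by simp

definition loop_inv :: "'a \<Rightarrow> 'a" where
  "loop_inv x = (SOME y. x \<cdot> y = e)"

lemma right_inverse [simp]: "x \<cdot> loop_inv x = e"
proof -
  have "\<exists>y. x \<cdot> y = e"
    using bij_Lt[of x] by (metis Lt_def bij_pointE)
  then show ?thesis
    unfolding loop_inv_def by (rule someI_ex)
qed

lemma mult_loop_inv_mult [simp]: "x \<cdot> (loop_inv x \<cdot> z) = z"
proof -
  have "z \<cdot> x = (x \<cdot> (loop_inv x \<cdot> z)) \<cdot> x"
    using moufang[of x "loop_inv x" z] by simp
  then show ?thesis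
    by (metis right_cancel)
qed

lemma loop_inv_mult_mult [simp]: "loop_inv x \<cdot> (x \<cdot> y) = y"
  using mult_loop_inv_mult[of x "x \<cdot> y"] left_cancel by metis

lemma left_inverse [simp]: "loop_inv x \<cdot> x = e"
  using loop_inv_mult_mult[of x e] by simp

lemma mult_loop_inv_mult_right [simp]: "(y \<cdot> loop_inv x) \<cdot> x = y"
proof -
  have "x \<cdot> y = x \<cdot> ((y \<cdot> loop_inv x) \<cdot> x)"
    using moufang[of x y "loop_inv x"] flexible by simp
  then show ?thesis
    by (metis left_cancel)
qed

lemma mult_mult_loop_inv_right [simp]: "(y \<cdot> x) \<cdot> loop_inv x = y"
  using mult_loop_inv_mult_right[of "y \<cdot> x" x] right_cancel by metis

lemma loop_inv_unique: "x \<cdot> y = e \<Longrightarrow> y = loop_inv x"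
  using right_inverse[of x] left_cancel by metis

lemma loop_inv_loop_inv [simp]: "loop_inv (loop_inv x) = x"
  using loop_inv_unique[OF left_inverse[of x]] by simp

lemma loop_inv_mult: "loop_inv (x \<cdot> y) = loop_inv y \<cdot> loop_inv x"
proof -
  have "loop_inv (x \<cdot> y) \<cdot> x = loop_inv y"
    by (metis loop_inv_mult_mult mult_mult_loop_inv_right loop_inv_loop_inv)
  then show ?thesis
    by (metis mult_mult_loop_inv_right)
qed

lemma inv_Lt: "inv (L x) = L (loop_inv x)"
  by (rule inv_equality) (simp_all add: Lt_def)

lemma inv_Rt: "inv (R x) = R (loop_inv x)"
  by (rule inv_equality) (simp_all add: Rt_def)

lemma inv_Mt: "inv (M x) = M (loop_inv x)"
  by (rule inv_equality) (simp_all add: Mt_def Lt_def Rt_def flexible)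

lemma Lt_inject: "L x = L y \<Longrightarrow> x = y"
  unfolding Lt_def by (metis right_id)

lemma Rt_inject: "R x = R y \<Longrightarrow> x = y"
  unfolding Rt_def by (metis left_id)

lemma Lt_eq_Rt_imp_eq: "L x = R y \<Longrightarrow> x = y"
  unfolding Lt_def Rt_def by (metis left_id right_id)

lemma sigma_graph_eq:
  "sigma_graph mult = range (\<lambda>x. (L x, R x)) \<union> range (\<lambda>x. (R x, M (loop_inv x)))"
proof -
  have "sigma_graph mult = (\<Union>x. {(L x, R x), (L (loop_inv x), R (loop_inv x)),
      (R x, M (loop_inv x)), (R (loop_inv x), M (loop_inv (loop_inv x)))})"
    unfolding sigma_graph_def inv_Lt inv_Rt inv_Mt loop_inv_loop_inv ..
  then show ?thesis
    by (auto intro: range_eqI)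
qed

context
  fixes x :: 'a
  assumes commutes: "\<And>z. x \<cdot> z = z \<cdot> x"
begin

lemma commuting_mult_mult: "(x \<cdot> a) \<cdot> (x \<cdot> b) = x \<cdot> (x \<cdot> (a \<cdot> b))"
  using moufang[of x a b] commutes[of b] commutes[of "x \<cdot> (a \<cdot> b)"] by simp

lemma commuting_mult_loop_inv_right: "x \<cdot> (c \<cdot> loop_inv x) = c"
  using commutes[of "c \<cdot> loop_inv x"] by simp

lemma commuting_cube_mult_left: "(x \<cdot> (x \<cdot> (x \<cdot> u))) \<cdot> c = x \<cdot> (x \<cdot> (x \<cdot> (u \<cdot> c)))"
proof -
  have "(x \<cdot> (u \<cdot> c)) \<cdot> (x \<cdot> loop_inv c) = x \<cdot> (x \<cdot> u)"
    using commuting_mult_mult[of "u \<cdot> c" "loop_inv c"] by simp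
  then have uc: "(x \<cdot> (x \<cdot> u)) \<cdot> (c \<cdot> loop_inv x) = x \<cdot> (u \<cdot> c)"
    by (metis mult_mult_loop_inv_right loop_inv_mult loop_inv_loop_inv)
  have "(x \<cdot> (x \<cdot> (x \<cdot> u))) \<cdot> c = (x \<cdot> (x \<cdot> (x \<cdot> u))) \<cdot> (x \<cdot> (c \<cdot> loop_inv x))"
    by (simp add: commuting_mult_loop_inv_right)
  also have "\<dots> = x \<cdot> (x \<cdot> ((x \<cdot> (x \<cdot> u)) \<cdot> (c \<cdot> loop_inv x)))"
    by (rule commuting_mult_mult)
  finally show ?thesis
    by (simp add: uc)
qed

lemma commuting_cube_mult_right: "u \<cdot> (x \<cdot> (x \<cdot> (x \<cdot> c))) = x \<cdot> (x \<cdot> (x \<cdot> (u \<cdot> c)))"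
proof -
  have "(x \<cdot> (loop_inv u)) \<cdot> (x \<cdot> (u \<cdot> c)) = x \<cdot> (x \<cdot> c)"
    using commuting_mult_mult[of "loop_inv u" "u \<cdot> c"] by simp
  then have uc: "(u \<cdot> loop_inv x) \<cdot> (x \<cdot> (x \<cdot> c)) = x \<cdot> (u \<cdot> c)"
    by (metis loop_inv_mult_mult loop_inv_mult loop_inv_loop_inv)
  have "u \<cdot> (x \<cdot> (x \<cdot> (x \<cdot> c))) = (x \<cdot> (u \<cdot> loop_inv x)) \<cdot> (x \<cdot> (x \<cdot> (x \<cdot> c)))"
    by (simp add: commuting_mult_loop_inv_right)
  also have "\<dots> = x \<cdot> (x \<cdot> ((u \<cdot> loop_inv x) \<cdot> (x \<cdot> (x \<cdot> c))))"
    by (rule commuting_mult_mult)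
  finally show ?thesis
    by (simp add: uc)
qed

lemma commuting_cube_in_nucleus: "x \<cdot> (x \<cdot> x) \<in> nucleus mult"
proof -
  define d where "d = x \<cdot> (x \<cdot> x)"
  have d_left: "x \<cdot> (x \<cdot> (x \<cdot> c)) = d \<cdot> c" for c
    using commuting_cube_mult_left[of e c] unfolding d_def by simp
  have d_right: "x \<cdot> (x \<cdot> (x \<cdot> c)) = c \<cdot> d" for c
    using commuting_cube_mult_right[of c e] unfolding d_def by simp
  have "d \<in> nucleus mult"
    unfolding nucleus_def
  proof safe
    fix y z
    show "d \<cdot> (y \<cdot> z) = d \<cdot> y \<cdot> z"
      using commuting_cube_mult_left[of y z] d_left by metis
    show "y \<cdot> (d \<cdot> z) = y \<cdot> d \<cdot> z"
      using commuting_cube_mult_left[of y z] commuting_cube_mult_right[of y z] d_left d_right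
      by metis
    show "y \<cdot> (z \<cdot> d) = y \<cdot> z \<cdot> d"
      using commuting_cube_mult_right[of y z] d_right by metis
  qed
  then show ?thesis
    unfolding d_def .
qed

lemma commuting_Rt_eq_Mt_loop_inv:
  assumes "nucleus mult = {e}"
  shows "R x = M (loop_inv x)"
proof -
  have "x \<cdot> (x \<cdot> x) = e"
    using commuting_cube_in_nucleus assms by blast
  then have cube: "x \<cdot> (x \<cdot> (x \<cdot> c)) = c" for c
    using commuting_cube_mult_left[of e c] by simp
  have "inv (M x) = R x"
    by (rule inv_equality) (simp_all add: Mt_def Lt_def Rt_def commutes[symmetric] cube)
  then show ?thesis
    by (simp add: inv_Mt)
qed

end

lemma single_valued_sigma_graph:
  assumes "nucleus mult = {e}"
  shows "single_valued (sigma_graph mult)"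
proof -
  have key: "y = x \<and> R x = M (loop_inv x)" if "L x = R y" for x y
  proof
    show "y = x"
      using Lt_eq_Rt_imp_eq[OF that] ..
    then have "x \<cdot> z = z \<cdot> x" for z
      using fun_cong[OF that, of z] by (simp add: Lt_def Rt_def)
    then show "R x = M (loop_inv x)"
      using commuting_Rt_eq_Mt_loop_inv assms by blast
  qed
  show ?thesis
    unfolding single_valued_def sigma_graph_eq
    by (auto dest: Lt_inject Rt_inject key key[OF sym])
qed

end

theorem corollary6p2:
  fixes mult :: "'a \<Rightarrow> 'a \<Rightarrow> 'a" and e :: 'a
  assumes "is_loop mult e"
    and "is_moufang mult"
    and "nucleus mult = {e}"
  shows "(\<forall>(p, q) \<in> sigma_graph mult. \<forall>(p', q') \<in> sigma_graph mult. p = p' \<longrightarrow> q = q')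
         \<and> (\<forall>(p, q) \<in> sigma_graph mult. q \<in> Mlt mult)"
proof -
  interpret moufang_loop mult e
    using assms(1,2) by unfold_locales
  have "single_valued (sigma_graph mult)"
    using assms(3) by (rule single_valued_sigma_graph)
  then show ?thesis
    using Range_sigma_graph_subset_Mlt unfolding single_valued_def by fast
qed

end
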